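(* Let ${\bf D}$ be an $L\times N$ complex matrix with $L=Rd$, $N=Md$, whose columns have unit Euclidean norm, partitioned into consecutive column-blocks ${\bf D}[1],\dots,{\bf D}[M]$ of size $L\times d$, and assume ${\bf D}{\bf g}\neq{\bf 0}$ for every nonzero block $2k$-sparse ${\bf g}\in\mathbb{C}^N$. Let ${\bf x}_0\in\mathbb{C}^N$ be block $k$-sparse and ${\bf y}={\bf D}{\bf x}_0$. Let ${\bf D}_0$ be the $L\times (kd)$ matrix formed by the blocks ${\bf D}[\ell]$ corresponding to the nonzero blocks of ${\bf x}_0$ (so that the support has $k$ blocks), and $\overline{{\bf D}}_0$ the $L\times(N-kd)$ matrix formed by the remaining blocks of ${\bf D}$. If $$\rho_c({\bf D}_0^\dagger\overline{{\bf D}}_0)<1,$$ then both the BOMP algorithm and L-OPT recover ${\bf x}_0$ from ${\bf y}$. Moreover, in this case BOMP picks a correct new block (a block ${\bf D}[\ell]$ belonging to ${\bf D}_0$, not previously selected) in each step, and consequently converges (recovers ${\bf x}_0$) in at most $k$ steps.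
   Context: Vectors ${\bf x}\in\mathbb{C}^N$, $N=Md$, are viewed as concatenations of consecutive length-$d$ blocks ${\bf x}[1],\dots,{\bf x}[M]$; ${\bf x}$ is block $k$-sparse if $\|{\bf x}[\ell]\|_2>0$ for at most $k$ indices $\ell$. $\rho(\cdot)$ is the spectral norm and ${\bf A}^\dagger$ the Moore–Penrose pseudo-inverse. For a matrix ${\bf A}$ whose row and column numbers are multiples of $d$, with $(\ell,r)$th $d\times d$ block ${\bf A}[\ell,r]$, $\rho_c({\bf A})=\max_r\sum_\ell\rho({\bf A}[\ell,r])$. L-OPT: solve $\min_{\bf x}\sum_{\ell=1}^M\|{\bf x}[\ell]\|_2$ subject to ${\bf y}={\bf D}{\bf x}$; recovery means ${\bf x}_0$ is the unique minimizer. BOMP: initialize ${\bf r}_0={\bf y}$ and the selected index set $\mathcal I=\emptyset$. At stage $\ell\ge1$ choose $i_\ell=\arg\max_i\|{\bf D}^H[i]{\bf r}_{\ell-1}\|_2$, add $i_\ell$ to $\mathcal I$, compute coefficients ${\bf x}_\ell[i]$, $i\in\mathcal I$, minimizing $\|{\bf y}-\sum_{i\in\mathcal I}{\bf D}[i]{\bf x}_\ell[i]\|_2$, and set ${\bf r}_\ell={\bf y}-\sum_{i\in\mathcal I}{\bf D}[i]{\bf x}_\ell[i]$. Recovery means the resulting coefficient vector (zero on unselected blocks) equals ${\bf x}_0$. *)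

theory Defs
  imports "Jordan_Normal_Form.Matrix" "HOL-Library.Multiset"
begin

text \<open>Conventions: blocks are indexed from 0 (block l of a vector occupies
entries l*d ,..., l*d+d-1). Complex matrices/vectors are Jordan_Normal_Form
matrices/vectors with explicit dimensions.\<close>

definition ctrans :: "complex mat \<Rightarrow> complex mat" where
  "ctrans A = mat (dim_col A) (dim_row A) (\<lambda>(i,j). cnj (A $$ (j,i)))"

definition vnorm :: "complex vec \<Rightarrow> real" where
  "vnorm v = sqrt (\<Sum>i<dim_vec v. (cmod (v $ i))\<^sup>2)"

definition spec_norm :: "complex mat \<Rightarrow> real" where
  "spec_norm A = Sup {vnorm (A *\<^sub>v v) | v. dim_vec v = dim_col A \<and> vnorm v \<le> 1}"

definition pinv :: "complex mat \<Rightarrow> complex mat" where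
  "pinv A = (THE X. X \<in> carrier_mat (dim_col A) (dim_row A) \<and>
              A * X * A = A \<and> X * A * X = X \<and>
              ctrans (A * X) = A * X \<and> ctrans (X * A) = X * A)"

definition vblock :: "nat \<Rightarrow> complex vec \<Rightarrow> nat \<Rightarrow> complex vec" where
  "vblock d x l = vec d (\<lambda>i. x $ (l * d + i))"

definition cblock :: "nat \<Rightarrow> complex mat \<Rightarrow> nat \<Rightarrow> complex mat" where
  "cblock d A l = mat (dim_row A) d (\<lambda>(i,j). A $$ (i, l * d + j))"

definition mblock :: "nat \<Rightarrow> complex mat \<Rightarrow> nat \<Rightarrow> nat \<Rightarrow> complex mat" where
  "mblock d A l r = mat d d (\<lambda>(i,j). A $$ (l * d + i, r * d + j))"

definition block_support :: "nat \<Rightarrow> nat \<Rightarrow> complex vec \<Rightarrow> nat set" where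
  "block_support d M x = {l. l < M \<and> vnorm (vblock d x l) > 0}"

definition block_sparse :: "nat \<Rightarrow> nat \<Rightarrow> nat \<Rightarrow> complex vec \<Rightarrow> bool" where
  "block_sparse d M k x \<longleftrightarrow> card (block_support d M x) \<le> k"

definition rho_c :: "nat \<Rightarrow> complex mat \<Rightarrow> real" where
  "rho_c d A = Max (insert 0 ((\<lambda>r. \<Sum>l<dim_row A div d. spec_norm (mblock d A l r))
                            ` {..<dim_col A div d}))"

definition blocks_mat :: "nat \<Rightarrow> complex mat \<Rightarrow> nat list \<Rightarrow> complex mat" where
  "blocks_mat d A is = mat (dim_row A) (length is * d)
      (\<lambda>(i,j). A $$ (i, (is ! (j div d)) * d + j mod d))"

text \<open>Sum of the l2 norms of the blocks (L-OPT objective).\<close>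
definition mixed_norm :: "nat \<Rightarrow> nat \<Rightarrow> complex vec \<Rightarrow> real" where
  "mixed_norm d M x = (\<Sum>l<M. vnorm (vblock d x l))"

definition ls_coeffs :: "nat \<Rightarrow> nat \<Rightarrow> complex mat \<Rightarrow> complex vec \<Rightarrow> nat set \<Rightarrow> complex vec set" where
  "ls_coeffs d M D y I = {x. dim_vec x = M * d \<and> (\<forall>l<M. l \<notin> I \<longrightarrow> vblock d x l = 0\<^sub>v d) \<and>
      (\<forall>x'. dim_vec x' = M * d \<and> (\<forall>l<M. l \<notin> I \<longrightarrow> vblock d x' l = 0\<^sub>v d) \<longrightarrow>
            vnorm (y - D *\<^sub>v x) \<le> vnorm (y - D *\<^sub>v x'))}"

text \<open>A run of n stages of BOMP (any tie-breaking in the argmax):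
is ! j is the block chosen at stage j+1, xs ! j the coefficient vector
computed at stage j+1; the residual before stage j+1 is y for j = 0 and
y - D xs!(j-1) otherwise.\<close>
definition bomp_run :: "nat \<Rightarrow> nat \<Rightarrow> complex mat \<Rightarrow> complex vec \<Rightarrow> nat list \<Rightarrow> complex vec list \<Rightarrow> bool" where
  "bomp_run d M D y is xs \<longleftrightarrow> length is = length xs \<and>
     (\<forall>j < length is.
        (let r = (if j = 0 then y else y - D *\<^sub>v (xs ! (j - 1))) in
          is ! j < M \<and>
          (\<forall>i<M. vnorm (ctrans (cblock d D i) *\<^sub>v r) \<le> vnorm (ctrans (cblock d D (is ! j)) *\<^sub>v r)) \<and>
          xs ! j \<in> ls_coeffs d M D y (set (take (Suc j) is))))"

end

theory Submission
  imports Defs "Jordan_Normal_Form.Determinant" "HOL-Analysis.L2_Norm"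
begin

text \<open>Split \<open>D = [D\<^sub>0 | D\<^sub>0bar]\<close> along the support of \<open>x\<^sub>0\<close> and put \<open>A = D\<^sub>0\<^sup>\<dagger> D\<^sub>0bar\<close>.
Since \<open>D\<^sub>0\<close> is injective, \<open>D\<^sub>0 D\<^sub>0\<^sup>\<dagger>\<close> is the orthogonal projection onto its range, so every \<open>r\<close>
in that range satisfies \<open>D\<^sub>0bar\<^sup>H r = A\<^sup>H (D\<^sub>0\<^sup>H r)\<close>: each correlation of \<open>r\<close> with an
off-support block is at most \<open>\<rho>\<^sub>c(A) < 1\<close> times the largest correlation with a support block.
The BOMP residuals lie in the range of \<open>D\<^sub>0\<close> and are orthogonal to the blocks already chosen, so
every stage picks a new support block, and after \<open>k\<close> stages the least-squares fit is exact.
For L-OPT, a kernel vector \<open>(h\<^sub>0, h\<^sub>1)\<close> of \<open>D\<close> has \<open>h\<^sub>0 = -A h\<^sub>1\<close>, so the mixed norm of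
\<open>h\<^sub>0\<close> is strictly smaller than that of \<open>h\<^sub>1 \<noteq> 0\<close>, and the triangle inequality makes
\<open>x\<^sub>0 + h\<close> strictly worse than \<open>x\<^sub>0\<close>.\<close>

definition vinner :: "complex vec \<Rightarrow> complex vec \<Rightarrow> complex" where
  "vinner v w = (\<Sum>i<dim_vec v. v $ i * cnj (w $ i))"

lemma vnorm_L2: "vnorm v = L2_set (\<lambda>i. cmod (v $ i)) {..<dim_vec v}"
  unfolding vnorm_def L2_set_def by simp

lemma vnorm_nonneg [simp]: "0 \<le> vnorm v"
  unfolding vnorm_def by (simp add: sum_nonneg)

lemma vinner_self: "vinner v v = of_real ((vnorm v)\<^sup>2)"
  unfolding vnorm_def vinner_def of_real_sum
  by (simp add: sum_nonneg complex_norm_square[symmetric])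

lemma vinner_commute: "dim_vec w = dim_vec v \<Longrightarrow> vinner w v = cnj (vinner v w)"
  unfolding vinner_def by (simp add: mult.commute)

lemma vnorm_eq_0_iff: "vnorm v = 0 \<longleftrightarrow> v = 0\<^sub>v (dim_vec v)"
proof -
  have "vnorm v = 0 \<longleftrightarrow> (\<forall>i\<in>{..<dim_vec v}. cmod (v $ i) = 0)"
    unfolding vnorm_L2 by (rule L2_set_eq_0_iff) simp
  also have "\<dots> \<longleftrightarrow> v = 0\<^sub>v (dim_vec v)"
    by (auto simp: vec_eq_iff)
  finally show ?thesis .
qed

lemma vnorm_pos_iff: "0 < vnorm v \<longleftrightarrow> v \<noteq> 0\<^sub>v (dim_vec v)"
  using vnorm_eq_0_iff[of v] vnorm_nonneg[of v] by linarith

lemma vnorm_zero [simp]: "vnorm (0\<^sub>v n) = 0"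
  unfolding vnorm_def by simp

lemma vnorm_uminus [simp]: "vnorm (- v) = vnorm v"
  unfolding vnorm_def by simp

lemma vnorm_smult: "vnorm (c \<cdot>\<^sub>v v) = cmod c * vnorm v"
  unfolding vnorm_def
  by (simp add: norm_mult power_mult_distrib sum_distrib_left[symmetric] real_sqrt_mult)

lemma vnorm_triangle:
  assumes "dim_vec w = dim_vec v"
  shows "vnorm (v + w) \<le> vnorm v + vnorm w"
proof -
  have "vnorm (v + w) = L2_set (\<lambda>i. cmod (v $ i + w $ i)) {..<dim_vec v}"
    unfolding vnorm_L2 using assms by (intro L2_set_cong) auto
  also have "\<dots> \<le> L2_set (\<lambda>i. cmod (v $ i) + cmod (w $ i)) {..<dim_vec v}"
    by (rule L2_set_mono) (auto simp: norm_triangle_ineq)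
  also have "\<dots> \<le> vnorm v + vnorm w"
    unfolding vnorm_L2 using assms by (simp add: L2_set_triangle_ineq)
  finally show ?thesis .
qed

lemma vnorm_diff_le:
  assumes "dim_vec w = dim_vec v"
  shows "vnorm v - vnorm w \<le> vnorm (v - w)"
proof -
  have "v = (v - w) + w" using assms by (auto simp: vec_eq_iff)
  hence "vnorm v = vnorm ((v - w) + w)" by simp
  also have "\<dots> \<le> vnorm (v - w) + vnorm w" using assms by (intro vnorm_triangle) simp
  finally show ?thesis by simp
qed

lemma minus_eq_0_vecD:
  fixes a b :: "complex vec"
  assumes "dim_vec a = n" "dim_vec b = n" "a - b = 0\<^sub>v n"
  shows "a = b"
proof (rule eq_vecI)
  fix i assume "i < dim_vec b"
  thus "a $ i = b $ i" using arg_cong[OF assms(3), of "\<lambda>v. v $ i"] assms(1,2) by simp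
qed (use assms in simp)

lemma vnorm_minus_commute: "dim_vec a = dim_vec b \<Longrightarrow> vnorm (a - b) = vnorm (b - a)"
  unfolding vnorm_def by (simp add: norm_minus_commute)

lemma norm_vinner_le:
  assumes "dim_vec w = dim_vec v"
  shows "cmod (vinner v w) \<le> vnorm v * vnorm w"
proof -
  have "cmod (vinner v w) \<le> (\<Sum>i<dim_vec v. cmod (v $ i * cnj (w $ i)))"
    unfolding vinner_def by (rule norm_sum)
  also have "\<dots> = (\<Sum>i<dim_vec v. \<bar>cmod (v $ i)\<bar> * \<bar>cmod (w $ i)\<bar>)"
    by (simp add: norm_mult)
  also have "\<dots> \<le> vnorm v * vnorm w"
    unfolding vnorm_L2 assms by (rule L2_set_mult_ineq)
  finally show ?thesis .
qed

section \<open>Conjugate transpose and spectral norm\<close>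

lemma ctrans_dims [simp]: "dim_row (ctrans A) = dim_col A" "dim_col (ctrans A) = dim_row A"
  unfolding ctrans_def by auto

lemma ctrans_carrier [simp]: "A \<in> carrier_mat n m \<Longrightarrow> ctrans A \<in> carrier_mat m n"
  unfolding ctrans_def by auto

lemma index_ctrans [simp]:
  "i < dim_col A \<Longrightarrow> j < dim_row A \<Longrightarrow> ctrans A $$ (i, j) = cnj (A $$ (j, i))"
  unfolding ctrans_def by auto

lemma ctrans_ctrans [simp]: "ctrans (ctrans A) = A"
  by (rule eq_matI) auto

lemma ctrans_one [simp]: "ctrans (1\<^sub>m n) = 1\<^sub>m n"
  by (rule eq_matI) auto

lemma ctrans_mult: "dim_col A = dim_row B \<Longrightarrow> ctrans (A * B) = ctrans B * ctrans A"
  by (rule eq_matI) (auto simp: scalar_prod_def mult.commute intro: sum.cong)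

lemma vinner_adjoint:
  assumes "dim_vec z = dim_col A" "dim_vec w = dim_row A"
  shows "vinner (A *\<^sub>v z) w = vinner z (ctrans A *\<^sub>v w)"
proof -
  have "vinner (A *\<^sub>v z) w = (\<Sum>i<dim_row A. \<Sum>j<dim_col A. A $$ (i, j) * z $ j * cnj (w $ i))"
    unfolding vinner_def using assms
    by (auto simp: scalar_prod_def sum_distrib_right atLeast0LessThan intro!: sum.cong)
  also have "\<dots> = (\<Sum>j<dim_col A. \<Sum>i<dim_row A. A $$ (i, j) * z $ j * cnj (w $ i))"
    by (rule sum.swap)
  also have "\<dots> = vinner z (ctrans A *\<^sub>v w)"
    unfolding vinner_def using assms
    by (auto simp: scalar_prod_def sum_distrib_left atLeast0LessThan intro!: sum.cong)
  finally show ?thesis .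
qed

lemma ctrans_mult_vec_eq_0:
  assumes "dim_vec u = dim_col B" and "ctrans B *\<^sub>v (B *\<^sub>v u) = 0\<^sub>v (dim_col B)"
  shows "B *\<^sub>v u = 0\<^sub>v (dim_row B)"
proof -
  have "vinner (B *\<^sub>v u) (B *\<^sub>v u) = vinner u (ctrans B *\<^sub>v (B *\<^sub>v u))"
    by (rule vinner_adjoint) (use assms in auto)
  also have "\<dots> = 0" using assms by (simp add: vinner_def)
  finally have "vnorm (B *\<^sub>v u) = 0" by (simp add: vinner_self)
  thus ?thesis using vnorm_eq_0_iff by auto
qed

lemma vnorm_mult_le_entries:
  assumes "dim_vec v = dim_col A"
  shows "vnorm (A *\<^sub>v v) \<le> (\<Sum>i<dim_row A. \<Sum>j<dim_col A. cmod (A $$ (i, j))) * vnorm v"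
proof -
  have entry: "cmod (v $ j) \<le> vnorm v" if "j < dim_vec v" for j
    unfolding vnorm_L2 by (rule member_le_L2_set) (use that in auto)
  have "vnorm (A *\<^sub>v v) \<le> (\<Sum>i<dim_row A. cmod ((A *\<^sub>v v) $ i))"
    unfolding vnorm_L2 dim_mult_mat_vec by (rule L2_set_le_sum) auto
  also have "\<dots> \<le> (\<Sum>i<dim_row A. (\<Sum>j<dim_col A. cmod (A $$ (i, j))) * vnorm v)"
  proof (rule sum_mono)
    fix i assume i: "i \<in> {..<dim_row A}"
    have "cmod ((A *\<^sub>v v) $ i) = cmod (\<Sum>j<dim_col A. A $$ (i, j) * v $ j)"
      using i assms by (auto simp: scalar_prod_def atLeast0LessThan)
    also have "\<dots> \<le> (\<Sum>j<dim_col A. cmod (A $$ (i, j)) * vnorm v)"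
      by (rule order_trans[OF norm_sum sum_mono])
        (use entry assms in \<open>auto simp: norm_mult intro: mult_left_mono\<close>)
    finally show "cmod ((A *\<^sub>v v) $ i) \<le> (\<Sum>j<dim_col A. cmod (A $$ (i, j))) * vnorm v"
      by (simp add: sum_distrib_right)
  qed
  finally show ?thesis by (simp add: sum_distrib_right)
qed

lemma bdd_above_spec_norm:
  "bdd_above {vnorm (A *\<^sub>v v) | v. dim_vec v = dim_col A \<and> vnorm v \<le> 1}"
proof -
  let ?C = "\<Sum>i<dim_row A. \<Sum>j<dim_col A. cmod (A $$ (i, j))"
  show ?thesis
  proof (rule bdd_aboveI[of _ ?C], clarify)
    fix v assume v: "dim_vec v = dim_col A" "vnorm v \<le> 1"
    have "vnorm (A *\<^sub>v v) \<le> ?C * vnorm v" by (rule vnorm_mult_le_entries[OF v(1)])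
    also have "\<dots> \<le> ?C" using v(2) by (intro mult_left_le sum_nonneg) auto
    finally show "vnorm (A *\<^sub>v v) \<le> ?C" .
  qed
qed

lemma vnorm_le_spec_norm:
  "dim_vec v = dim_col A \<Longrightarrow> vnorm v \<le> 1 \<Longrightarrow> vnorm (A *\<^sub>v v) \<le> spec_norm A"
  unfolding spec_norm_def by (rule cSup_upper[OF _ bdd_above_spec_norm]) blast

lemma spec_norm_nonneg: "0 \<le> spec_norm A"
  by (rule order_trans[OF vnorm_nonneg vnorm_le_spec_norm[of "0\<^sub>v (dim_col A)"]]) simp_all

lemma vnorm_mult_le_spec_norm:
  assumes v: "dim_vec v = dim_col A"
  shows "vnorm (A *\<^sub>v v) \<le> spec_norm A * vnorm v"
proof (cases "v = 0\<^sub>v (dim_vec v)")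
  case True
  have "A *\<^sub>v v = 0\<^sub>v (dim_row A)" using True v by (auto simp: vec_eq_iff scalar_prod_def)
  thus ?thesis using spec_norm_nonneg[of A] by simp
next
  case False
  hence pos: "0 < vnorm v" using vnorm_pos_iff by blast
  define c where "c = complex_of_real (1 / vnorm v)"
  have cm: "cmod c = 1 / vnorm v" unfolding c_def norm_of_real using pos by simp
  have "A *\<^sub>v (c \<cdot>\<^sub>v v) = c \<cdot>\<^sub>v (A *\<^sub>v v)"
    by (rule mult_mat_vec[of A "dim_row A" "dim_col A"]) (auto intro!: carrier_vecI v)
  moreover have "vnorm (A *\<^sub>v (c \<cdot>\<^sub>v v)) \<le> spec_norm A"
    by (rule vnorm_le_spec_norm) (use v pos in \<open>simp_all add: vnorm_smult cm\<close>)
  ultimately have "vnorm (A *\<^sub>v v) / vnorm v \<le> spec_norm A"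
    by (simp add: vnorm_smult cm)
  thus ?thesis using pos by (simp add: divide_le_eq mult.commute)
qed

lemma vnorm_ctrans_mult_le_spec_norm:
  assumes w: "dim_vec w = dim_row A"
  shows "vnorm (ctrans A *\<^sub>v w) \<le> spec_norm A * vnorm w"
proof -
  define z where "z = ctrans A *\<^sub>v w"
  have z: "dim_vec z = dim_col A" unfolding z_def by simp
  have "(vnorm z)\<^sup>2 = cmod (vinner z z)" by (simp only: vinner_self norm_of_real) simp
  also have "vinner z z = cnj (vinner (A *\<^sub>v z) w)"
    using vinner_adjoint[OF z w] vinner_commute[of z "ctrans A *\<^sub>v w"] by (simp add: z_def)
  also have "cmod (cnj (vinner (A *\<^sub>v z) w)) \<le> vnorm (A *\<^sub>v z) * vnorm w"
    by (simp add: norm_vinner_le w)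
  also have "\<dots> \<le> (spec_norm A * vnorm z) * vnorm w"
    by (rule mult_right_mono[OF vnorm_mult_le_spec_norm[OF z]]) simp
  finally have "vnorm z * vnorm z \<le> vnorm z * (spec_norm A * vnorm w)"
    by (simp add: power2_eq_square ac_simps)
  moreover have "0 \<le> spec_norm A * vnorm w" using spec_norm_nonneg[of A] by simp
  ultimately have "vnorm z \<le> spec_norm A * vnorm w"
    using vnorm_nonneg[of z] by (cases "vnorm z = 0") auto
  thus ?thesis unfolding z_def .
qed

section \<open>The pseudo-inverse of a matrix with trivial kernel\<close>

lemma gram_invertible:
  assumes B: "B \<in> carrier_mat n m"
    and inj: "\<And>v. v \<in> carrier_vec m \<Longrightarrow> B *\<^sub>v v = 0\<^sub>v n \<Longrightarrow> v = 0\<^sub>v m"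
  obtains G' where "G' \<in> carrier_mat m m" "(ctrans B * B) * G' = 1\<^sub>m m" "G' * (ctrans B * B) = 1\<^sub>m m"
proof -
  have G: "ctrans B * B \<in> carrier_mat m m" using B by auto
  have "det (ctrans B * B) \<noteq> 0"
  proof
    assume "det (ctrans B * B) = 0"
    then obtain v where v: "v \<in> carrier_vec m" "v \<noteq> 0\<^sub>v m" "(ctrans B * B) *\<^sub>v v = 0\<^sub>v m"
      using det_0_iff_vec_prod_zero[OF G] by blast
    have "ctrans B *\<^sub>v (B *\<^sub>v v) = 0\<^sub>v (dim_col B)"
      using v B by (simp add: assoc_mult_mat_vec[symmetric, of _ m n _ m])
    hence "B *\<^sub>v v = 0\<^sub>v n" using ctrans_mult_vec_eq_0[of v B] v B by auto
    with inj v show False by blast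
  qed
  from det_non_zero_imp_unit[OF G this, of undefined] show thesis
    unfolding Units_def ring_mat_def using that by auto
qed

lemma inverse_of_hermitian:
  assumes G: "G \<in> carrier_mat m m" and G': "G' \<in> carrier_mat m m"
    and herm: "ctrans G = G" and inv: "G * G' = 1\<^sub>m m" "G' * G = 1\<^sub>m m"
  shows "ctrans G' = G'"
proof -
  have left: "ctrans G' * G = 1\<^sub>m m"
    using arg_cong[OF inv(1), of ctrans] ctrans_mult[of G G'] G G' herm by auto
  have "ctrans G' = ctrans G' * (G * G')" using G' inv by simp
  also have "\<dots> = (ctrans G' * G) * G'" using G G' by (simp add: assoc_mult_mat[of _ m m])
  also have "\<dots> = G'" using left G' by simp
  finally show ?thesis .
qed

lemma pinv_of_injective:
  assumes B: "B \<in> carrier_mat n m"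
    and inj: "\<And>v. v \<in> carrier_vec m \<Longrightarrow> B *\<^sub>v v = 0\<^sub>v n \<Longrightarrow> v = 0\<^sub>v m"
  shows "pinv B \<in> carrier_mat m n" "pinv B * B = 1\<^sub>m m" "ctrans (B * pinv B) = B * pinv B"
proof -
  let ?G = "ctrans B * B"
  have BH: "ctrans B \<in> carrier_mat m n" using B by auto
  have G: "?G \<in> carrier_mat m m" using B by auto
  obtain G' where G': "G' \<in> carrier_mat m m" "?G * G' = 1\<^sub>m m" "G' * ?G = 1\<^sub>m m"
    using gram_invertible[OF B inj] by blast
  have G'H: "ctrans G' = G'"
    by (rule inverse_of_hermitian[OF G G'(1) _ G'(2,3)]) (use B in \<open>simp add: ctrans_mult\<close>)
  define X where "X = G' * ctrans B"
  have X: "X \<in> carrier_mat m n" unfolding X_def using G' BH by auto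
  have XB: "X * B = 1\<^sub>m m" unfolding X_def
    using G' BH B by (simp add: assoc_mult_mat[of _ m m _ n _ m])
  have BX: "ctrans (B * X) = B * X" unfolding X_def
    using B G' BH G'H by (simp add: ctrans_mult assoc_mult_mat[of _ n m _ m _ n])
  let ?P = "\<lambda>X. X \<in> carrier_mat (dim_col B) (dim_row B) \<and> B * X * B = B \<and> X * B * X = X \<and>
              ctrans (B * X) = B * X \<and> ctrans (X * B) = X * B"
  have "?P X"
    using B X XB BX by (simp add: assoc_mult_mat[of _ n m _ n _ m])
  moreover have "Y = X" if PY: "?P Y" for Y
  proof -
    have Y: "Y \<in> carrier_mat m n" using PY B by auto
    have "ctrans B = ctrans (B * Y * B)" using PY by simp
    also have "\<dots> = ctrans B * ctrans (B * Y)"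
      using B Y by (simp add: ctrans_mult assoc_mult_mat[of _ m n _ m _ n])
    also have "\<dots> = ?G * Y" using PY B Y BH by (simp add: assoc_mult_mat[of _ m n _ m _ n])
    finally have "G' * ctrans B = G' * (?G * Y)" by simp
    also have "\<dots> = (G' * ?G) * Y" by (rule assoc_mult_mat[symmetric]) (use G' G Y in auto)
    also have "\<dots> = Y" unfolding G'(3) using Y by simp
    finally show ?thesis unfolding X_def by simp
  qed
  ultimately have "pinv B = X" unfolding pinv_def by (rule the_equality)
  thus "pinv B \<in> carrier_mat m n" "pinv B * B = 1\<^sub>m m" "ctrans (B * pinv B) = B * pinv B"
    using X XB BX by auto
qed

lemma ctrans_mult_range_via_pinv:
  assumes B: "B \<in> carrier_mat n m"
    and inj: "\<And>v. v \<in> carrier_vec m \<Longrightarrow> B *\<^sub>v v = 0\<^sub>v n \<Longrightarrow> v = 0\<^sub>v m"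
    and C: "C \<in> carrier_mat n p" and u: "u \<in> carrier_vec m"
  shows "ctrans C *\<^sub>v (B *\<^sub>v u) = ctrans (pinv B * C) *\<^sub>v (ctrans B *\<^sub>v (B *\<^sub>v u))"
proof -
  note pinv = pinv_of_injective[OF B inj]
  have BH: "ctrans B \<in> carrier_mat m n" and PH: "ctrans (pinv B) \<in> carrier_mat n m"
    and CH: "ctrans C \<in> carrier_mat p n" using B C pinv(1) by auto
  have Bu: "B *\<^sub>v u \<in> carrier_vec n" using B u by simp
  \<comment> \<open>\<open>B * pinv B\<close> is the orthogonal projection onto the range of \<open>B\<close>\<close>
  have proj: "ctrans (pinv B) * ctrans B = B * pinv B"
    using pinv(1,3) B by (simp add: ctrans_mult[symmetric])
  have "(B * pinv B) *\<^sub>v (B *\<^sub>v u) = ((B * pinv B) * B) *\<^sub>v u"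
    by (rule assoc_mult_mat_vec[symmetric]) (use B pinv(1) u in auto)
  also have "(B * pinv B) * B = B * (pinv B * B)"
    by (rule assoc_mult_mat) (use B pinv(1) in auto)
  finally have fix_range: "(B * pinv B) *\<^sub>v (B *\<^sub>v u) = B *\<^sub>v u"
    using pinv(2) B by simp
  have "ctrans (pinv B * C) *\<^sub>v (ctrans B *\<^sub>v (B *\<^sub>v u))
      = (ctrans C * ctrans (pinv B)) *\<^sub>v (ctrans B *\<^sub>v (B *\<^sub>v u))"
    using C pinv(1) by (simp add: ctrans_mult)
  also have "\<dots> = ctrans C *\<^sub>v (ctrans (pinv B) *\<^sub>v (ctrans B *\<^sub>v (B *\<^sub>v u)))"
    by (rule assoc_mult_mat_vec[OF CH PH]) (use BH Bu in simp)
  also have "ctrans (pinv B) *\<^sub>v (ctrans B *\<^sub>v (B *\<^sub>v u)) = (B * pinv B) *\<^sub>v (B *\<^sub>v u)"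
    unfolding proj[symmetric] by (rule assoc_mult_mat_vec[symmetric, OF PH BH Bu])
  finally show ?thesis unfolding fix_range by simp
qed

lemma pinv_solves_kernel_relation:
  assumes B: "B \<in> carrier_mat n m"
    and inj: "\<And>v. v \<in> carrier_vec m \<Longrightarrow> B *\<^sub>v v = 0\<^sub>v n \<Longrightarrow> v = 0\<^sub>v m"
    and C: "C \<in> carrier_mat n p" and h0: "h0 \<in> carrier_vec m" and h1: "h1 \<in> carrier_vec p"
    and rel: "B *\<^sub>v h0 + C *\<^sub>v h1 = 0\<^sub>v n"
  shows "h0 = - ((pinv B * C) *\<^sub>v h1)"
proof -
  note pinv = pinv_of_injective[OF B inj]
  have "pinv B *\<^sub>v (B *\<^sub>v h0 + C *\<^sub>v h1) = pinv B *\<^sub>v (B *\<^sub>v h0) + pinv B *\<^sub>v (C *\<^sub>v h1)"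
    by (rule mult_add_distrib_mat_vec[OF pinv(1)]) (use B C h0 h1 in auto)
  also have "pinv B *\<^sub>v (B *\<^sub>v h0) = (pinv B * B) *\<^sub>v h0"
    by (rule assoc_mult_mat_vec[symmetric, OF pinv(1) B h0])
  also have "\<dots> = h0" using pinv(2) h0 by simp
  also have "pinv B *\<^sub>v (C *\<^sub>v h1) = (pinv B * C) *\<^sub>v h1"
    by (rule assoc_mult_mat_vec[symmetric, OF pinv(1) C h1])
  finally have "pinv B *\<^sub>v (B *\<^sub>v h0 + C *\<^sub>v h1) = h0 + (pinv B * C) *\<^sub>v h1" .
  moreover have "pinv B *\<^sub>v 0\<^sub>v n = 0\<^sub>v m"
    using pinv(1) by (intro eq_vecI) (auto simp: scalar_prod_def)
  ultimately have sum0: "h0 + (pinv B * C) *\<^sub>v h1 = 0\<^sub>v m" using rel by simp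
  show ?thesis
  proof (rule eq_vecI)
    fix i assume "i < dim_vec (- ((pinv B * C) *\<^sub>v h1))"
    hence "i < m" using pinv(1) by simp
    thus "h0 $ i = (- ((pinv B * C) *\<^sub>v h1)) $ i"
      using arg_cong[OF sum0, of "\<lambda>v. v $ i"] h0 pinv(1) by (simp add: eq_neg_iff_add_eq_0)
  qed (use h0 pinv(1) in simp)
qed

lemma sum_nat_blocks: "(\<Sum>c<q * (d::nat). f c) = (\<Sum>r<q. \<Sum>s<d. f (r * d + s))"
proof -
  have "(\<Sum>c<q * d. f c) = (\<Sum>r<q. sum f {r * d..<r * d + d})"
    by (rule sum.nat_group[symmetric])
  also have "\<dots> = (\<Sum>r<q. \<Sum>s<d. f (r * d + s))"
    using sum.shift_bounds_nat_ivl[of f 0 "_ * d" d]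
    by (simp add: atLeast0LessThan add.commute)
  finally show ?thesis .
qed

lemma block_index_less: "l < q \<Longrightarrow> t < d \<Longrightarrow> l * d + t < q * (d::nat)"
proof -
  assume "l < q" "t < d"
  hence "l * d + t < Suc l * d" by simp
  also have "\<dots> \<le> q * d" using \<open>l < q\<close> by (intro mult_right_mono) auto
  finally show ?thesis .
qed

lemma block_index_div_mod [simp]:
  "t < (d::nat) \<Longrightarrow> (l * d + t) div d = l" "t < d \<Longrightarrow> (l * d + t) mod d = t"
  by auto

lemma dim_vblock [simp]: "dim_vec (vblock d x l) = d"
  unfolding vblock_def by simp

lemma index_vblock [simp]: "t < d \<Longrightarrow> vblock d x l $ t = x $ (l * d + t)"
  unfolding vblock_def by simp

lemma dim_cblock [simp]: "dim_row (cblock d A l) = dim_row A" "dim_col (cblock d A l) = d"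
  unfolding cblock_def by auto

lemma dim_mblock [simp]: "dim_row (mblock d A l r) = d" "dim_col (mblock d A l r) = d"
  unfolding mblock_def by auto

lemma index_mblock [simp]:
  "i < d \<Longrightarrow> j < d \<Longrightarrow> mblock d A l r $$ (i, j) = A $$ (l * d + i, r * d + j)"
  unfolding mblock_def by auto

lemma dim_blocks_mat [simp]:
  "dim_row (blocks_mat d A ls) = dim_row A" "dim_col (blocks_mat d A ls) = length ls * d"
  unfolding blocks_mat_def by auto

lemma vec_index_via_vblock: "c < q * d \<Longrightarrow> v $ c = vblock d v (c div d) $ (c mod d)"
  by (cases "d = 0") simp_all

lemma vblock_eqI:
  assumes "dim_vec a = q * d" "dim_vec b = q * d" "\<And>l. l < q \<Longrightarrow> vblock d a l = vblock d b l"
  shows "a = b"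
proof (rule eq_vecI)
  fix c assume "c < dim_vec b"
  hence c: "c < q * d" using assms by simp
  hence "c div d < q" by (simp add: less_mult_imp_div_less)
  thus "a $ c = b $ c" using c assms(3) by (simp add: vec_index_via_vblock[OF c])
qed (use assms in simp)

lemma vblock_zero: "l < q \<Longrightarrow> vblock d (0\<^sub>v (q * d)) l = 0\<^sub>v d"
  by (rule eq_vecI) (auto simp: block_index_less)

lemma vblock_uminus: "dim_vec a = q * d \<Longrightarrow> l < q \<Longrightarrow> vblock d (- a) l = - vblock d a l"
  by (rule eq_vecI) (auto simp: block_index_less)

lemma vblock_add:
  "dim_vec a = q * d \<Longrightarrow> dim_vec b = q * d \<Longrightarrow> l < q \<Longrightarrow>
   vblock d (a + b) l = vblock d a l + vblock d b l"
  by (rule eq_vecI) (auto simp: block_index_less)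

lemma vblock_minus:
  "dim_vec a = q * d \<Longrightarrow> dim_vec b = q * d \<Longrightarrow> l < q \<Longrightarrow>
   vblock d (a - b) l = vblock d a l - vblock d b l"
  by (rule eq_vecI) (auto simp: block_index_less)

lemma vblock_smult: "dim_vec b = q * d \<Longrightarrow> l < q \<Longrightarrow> vblock d (c \<cdot>\<^sub>v b) l = c \<cdot>\<^sub>v vblock d b l"
  by (rule eq_vecI) (auto simp: block_index_less)

lemma mult_mat_vec_blocks:
  assumes "dim_col A = M * d" "dim_vec x = M * d" "i < dim_row A"
  shows "(A *\<^sub>v x) $ i = (\<Sum>l<M. (cblock d A l *\<^sub>v vblock d x l) $ i)"
proof -
  have "(A *\<^sub>v x) $ i = (\<Sum>c<M * d. A $$ (i, c) * x $ c)"
    using assms by (simp add: scalar_prod_def atLeast0LessThan)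
  also have "\<dots> = (\<Sum>l<M. (cblock d A l *\<^sub>v vblock d x l) $ i)"
    unfolding sum_nat_blocks
    using assms by (auto simp: scalar_prod_def cblock_def atLeast0LessThan intro!: sum.cong)
  finally show ?thesis .
qed

definition gather_blocks :: "nat \<Rightarrow> nat list \<Rightarrow> complex vec \<Rightarrow> complex vec" where
  "gather_blocks d ls x = vec (length ls * d) (\<lambda>j. x $ (ls ! (j div d) * d + j mod d))"

lemma dim_gather_blocks [simp]: "dim_vec (gather_blocks d ls x) = length ls * d"
  unfolding gather_blocks_def by simp

lemma vblock_gather_blocks:
  "j < length ls \<Longrightarrow> vblock d (gather_blocks d ls x) j = vblock d x (ls ! j)"
  by (rule eq_vecI) (auto simp: gather_blocks_def block_index_less)

lemma gather_blocks_minus: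
  assumes "dim_vec a = M * d" "dim_vec b = M * d" "set ls \<subseteq> {..<M}"
  shows "gather_blocks d ls (a - b) = gather_blocks d ls a - gather_blocks d ls b"
proof (rule vblock_eqI[of _ "length ls"])
  fix j assume "j < length ls"
  moreover have "ls ! j < M" using calculation assms(3) nth_mem by blast
  ultimately show "vblock d (gather_blocks d ls (a - b)) j = vblock d (gather_blocks d ls a - gather_blocks d ls b) j"
    using assms by (simp add: vblock_gather_blocks vblock_minus[of _ "length ls"] vblock_minus[of a M])
qed simp_all

lemma gather_blocks_zero:
  assumes "set ls \<subseteq> {..<M}"
  shows "gather_blocks d ls (0\<^sub>v (M * d)) = 0\<^sub>v (length ls * d)"
proof (rule vblock_eqI[of _ "length ls"])
  fix j assume "j < length ls"
  moreover have "ls ! j < M" using calculation assms nth_mem by blast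
  ultimately show "vblock d (gather_blocks d ls (0\<^sub>v (M * d))) j = vblock d (0\<^sub>v (length ls * d)) j"
    by (simp add: vblock_gather_blocks vblock_zero)
qed simp_all

lemma nonzero_vblock:
  assumes "dim_vec v = q * d" "v \<noteq> 0\<^sub>v (q * d)"
  obtains l where "l < q" "vblock d v l \<noteq> 0\<^sub>v d"
  using vblock_eqI[OF assms(1), of "0\<^sub>v (q * d)"] assms(2) vblock_zero by fastforce

lemma blocks_mat_mult_vec:
  assumes "dim_col A = M * d" "set ls \<subseteq> {..<M}" "dim_vec u = length ls * d" "i < dim_row A"
  shows "(blocks_mat d A ls *\<^sub>v u) $ i = (\<Sum>j<length ls. (cblock d A (ls ! j) *\<^sub>v vblock d u j) $ i)"
proof -
  have entry: "blocks_mat d A ls $$ (i, j * d + s) = A $$ (i, ls ! j * d + s)"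
    if "j < length ls" "s < d" for j s
    using that assms block_index_less[OF that] unfolding blocks_mat_def by auto
  have "(blocks_mat d A ls *\<^sub>v u) $ i = (\<Sum>c<length ls * d. blocks_mat d A ls $$ (i, c) * u $ c)"
    using assms by (simp add: scalar_prod_def atLeast0LessThan)
  also have "\<dots> = (\<Sum>j<length ls. (cblock d A (ls ! j) *\<^sub>v vblock d u j) $ i)"
    unfolding sum_nat_blocks
    using assms by (auto simp: entry scalar_prod_def cblock_def atLeast0LessThan intro!: sum.cong)
  finally show ?thesis .
qed

lemma vblock_ctrans_blocks_mat:
  assumes "dim_col A = M * d" "set ls \<subseteq> {..<M}" "dim_vec r = dim_row A" "j < length ls"
  shows "vblock d (ctrans (blocks_mat d A ls) *\<^sub>v r) j = ctrans (cblock d A (ls ! j)) *\<^sub>v r"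
proof (rule eq_vecI)
  fix t assume "t < dim_vec (ctrans (cblock d A (ls ! j)) *\<^sub>v r)"
  hence t: "t < d" by simp
  have "ls ! j < M" using assms nth_mem by blast
  thus "vblock d (ctrans (blocks_mat d A ls) *\<^sub>v r) j $ t = (ctrans (cblock d A (ls ! j)) *\<^sub>v r) $ t"
    using t assms block_index_less[OF assms(4) t] block_index_less[of "ls ! j" M t d]
    by (simp add: scalar_prod_def blocks_mat_def cblock_def ctrans_def)
qed simp

lemma L2_set_sum_le:
  assumes "finite R"
  shows "L2_set (\<lambda>t. \<Sum>r\<in>R. f r t) T \<le> (\<Sum>r\<in>R. L2_set (f r) T)"
  using assms
proof (induction R rule: finite_induct)
  case (insert a R)
  have "L2_set (\<lambda>t. \<Sum>r\<in>insert a R. f r t) T = L2_set (\<lambda>t. f a t + (\<Sum>r\<in>R. f r t)) T"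
    using insert by simp
  also have "\<dots> \<le> L2_set (f a) T + L2_set (\<lambda>t. \<Sum>r\<in>R. f r t) T"
    by (rule L2_set_triangle_ineq)
  finally show ?case using insert by simp
qed (simp add: L2_set_def)

lemma vnorm_le_sum_vnorm:
  assumes "dim_vec v = d" "\<And>r. r < q \<Longrightarrow> dim_vec (g r) = d"
    and "\<And>t. t < d \<Longrightarrow> v $ t = (\<Sum>r<(q::nat). g r $ t)"
  shows "vnorm v \<le> (\<Sum>r<q. vnorm (g r))"
proof -
  have "vnorm v = L2_set (\<lambda>t. cmod (\<Sum>r<q. g r $ t)) {..<d}"
    unfolding vnorm_L2 using assms by (intro L2_set_cong) auto
  also have "\<dots> \<le> L2_set (\<lambda>t. \<Sum>r<q. cmod (g r $ t)) {..<d}"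
    by (rule L2_set_mono) (auto intro: norm_sum)
  also have "\<dots> \<le> (\<Sum>r<q. L2_set (\<lambda>t. cmod (g r $ t)) {..<d})"
    by (rule L2_set_sum_le) simp
  also have "\<dots> = (\<Sum>r<q. vnorm (g r))" unfolding vnorm_L2 using assms by simp
  finally show ?thesis .
qed

lemma max_vblock:
  assumes "dim_vec v = q * d" "v \<noteq> 0\<^sub>v (q * d)"
  obtains l where "l < q" "0 < vnorm (vblock d v l)"
    "\<And>j. j < q \<Longrightarrow> vnorm (vblock d v j) \<le> vnorm (vblock d v l)"
proof -
  let ?f = "\<lambda>j. vnorm (vblock d v j)"
  obtain l0 where l0: "l0 < q" "vblock d v l0 \<noteq> 0\<^sub>v d" by (rule nonzero_vblock[OF assms])
  have fin: "finite (?f ` {..<q})" "?f ` {..<q} \<noteq> {}" using l0 by auto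
  obtain l where l: "l < q" "?f l = Max (?f ` {..<q})" using Max_in[OF fin] by auto
  have le: "?f j \<le> ?f l" if "j < q" for j unfolding l(2) by (rule Max_ge) (use that fin in auto)
  have "0 < ?f l0" using l0(2) vnorm_pos_iff by simp
  with le[OF l0(1)] have "0 < ?f l" by simp
  with l(1) le show thesis using that by blast
qed

lemma mixed_norm_zero [simp]: "mixed_norm d q (0\<^sub>v (q * d)) = 0"
  unfolding mixed_norm_def by (simp add: vblock_zero)

lemma mixed_norm_pos:
  assumes "dim_vec v = q * d" "v \<noteq> 0\<^sub>v (q * d)"
  shows "0 < mixed_norm d q v"
proof -
  obtain l where l: "l < q" "vblock d v l \<noteq> 0\<^sub>v d" by (rule nonzero_vblock[OF assms])
  have "vnorm (vblock d v l) \<le> mixed_norm d q v"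
    unfolding mixed_norm_def by (rule member_le_sum) (use l in auto)
  moreover have "0 < vnorm (vblock d v l)" using l(2) vnorm_pos_iff by simp
  ultimately show ?thesis by simp
qed

lemma mixed_norm_uminus: "dim_vec v = q * d \<Longrightarrow> mixed_norm d q (- v) = mixed_norm d q v"
  unfolding mixed_norm_def by (intro sum.cong) (simp_all add: vblock_uminus[of v q])

lemma mixed_norm_le_diff:
  assumes "dim_vec a = q * d" "dim_vec b = q * d"
  shows "mixed_norm d q a \<le> mixed_norm d q b + mixed_norm d q (b - a)"
proof -
  have "vnorm (vblock d a l) \<le> vnorm (vblock d b l) + vnorm (vblock d (b - a) l)" if "l < q" for l
    using vnorm_diff_le[of "vblock d b l" "vblock d a l"] vblock_minus[OF assms(2,1) that]
      vnorm_minus_commute[of "vblock d a l" "vblock d b l"] by simp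
  thus ?thesis unfolding mixed_norm_def sum.distrib[symmetric] by (intro sum_mono) simp
qed

lemma vnorm_vblock_mult_le:
  assumes A: "A \<in> carrier_mat (p * d) (q * d)" and w: "dim_vec w = q * d" and l: "l < p"
  shows "vnorm (vblock d (A *\<^sub>v w) l) \<le> (\<Sum>r<q. spec_norm (mblock d A l r) * vnorm (vblock d w r))"
proof -
  have "vnorm (vblock d (A *\<^sub>v w) l) \<le> (\<Sum>r<q. vnorm (mblock d A l r *\<^sub>v vblock d w r))"
  proof (rule vnorm_le_sum_vnorm)
    fix t assume t: "t < d"
    have "vblock d (A *\<^sub>v w) l $ t = (\<Sum>c<q * d. A $$ (l * d + t, c) * w $ c)"
      using A w t block_index_less[OF l t] by (simp add: scalar_prod_def atLeast0LessThan)
    also have "\<dots> = (\<Sum>r<q. (mblock d A l r *\<^sub>v vblock d w r) $ t)"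
      unfolding sum_nat_blocks using t by (auto simp: scalar_prod_def atLeast0LessThan intro!: sum.cong)
    finally show "vblock d (A *\<^sub>v w) l $ t = (\<Sum>r<q. (mblock d A l r *\<^sub>v vblock d w r) $ t)" .
  qed auto
  also have "\<dots> \<le> (\<Sum>r<q. spec_norm (mblock d A l r) * vnorm (vblock d w r))"
    by (intro sum_mono vnorm_mult_le_spec_norm) simp
  finally show ?thesis .
qed

lemma vnorm_vblock_ctrans_mult_le:
  assumes A: "A \<in> carrier_mat (p * d) (q * d)" and w: "dim_vec w = p * d" and r: "r < q"
  shows "vnorm (vblock d (ctrans A *\<^sub>v w) r) \<le> (\<Sum>l<p. spec_norm (mblock d A l r) * vnorm (vblock d w l))"
proof -
  have "vnorm (vblock d (ctrans A *\<^sub>v w) r) \<le> (\<Sum>l<p. vnorm (ctrans (mblock d A l r) *\<^sub>v vblock d w l))"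
  proof (rule vnorm_le_sum_vnorm)
    fix t assume t: "t < d"
    have "vblock d (ctrans A *\<^sub>v w) r $ t = (\<Sum>i<p * d. cnj (A $$ (i, r * d + t)) * w $ i)"
      using A w t block_index_less[OF r t] by (simp add: scalar_prod_def atLeast0LessThan)
    also have "\<dots> = (\<Sum>l<p. (ctrans (mblock d A l r) *\<^sub>v vblock d w l) $ t)"
      unfolding sum_nat_blocks using t by (auto simp: scalar_prod_def atLeast0LessThan intro!: sum.cong)
    finally show "vblock d (ctrans A *\<^sub>v w) r $ t = (\<Sum>l<p. (ctrans (mblock d A l r) *\<^sub>v vblock d w l) $ t)" .
  qed auto
  also have "\<dots> \<le> (\<Sum>l<p. spec_norm (mblock d A l r) * vnorm (vblock d w l))"
    by (intro sum_mono vnorm_ctrans_mult_le_spec_norm) simp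
  finally show ?thesis .
qed

lemma block_column_sum_le_rho_c:
  assumes "A \<in> carrier_mat (p * d) (q * d)" "0 < d" "r < q"
  shows "(\<Sum>l<p. spec_norm (mblock d A l r)) \<le> rho_c d A"
  unfolding rho_c_def using assms by (intro Max_ge) auto

lemma mixed_norm_mult_le_rho_c:
  assumes A: "A \<in> carrier_mat (p * d) (q * d)" and d: "0 < d" and w: "dim_vec w = q * d"
  shows "mixed_norm d p (A *\<^sub>v w) \<le> rho_c d A * mixed_norm d q w"
proof -
  have "mixed_norm d p (A *\<^sub>v w) \<le> (\<Sum>l<p. \<Sum>r<q. spec_norm (mblock d A l r) * vnorm (vblock d w r))"
    unfolding mixed_norm_def by (intro sum_mono vnorm_vblock_mult_le[OF A w]) simp
  also have "\<dots> = (\<Sum>r<q. (\<Sum>l<p. spec_norm (mblock d A l r)) * vnorm (vblock d w r))"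
    by (subst sum.swap) (simp add: sum_distrib_right)
  also have "\<dots> \<le> (\<Sum>r<q. rho_c d A * vnorm (vblock d w r))"
    by (intro sum_mono mult_right_mono block_column_sum_le_rho_c[OF A d]) auto
  finally show ?thesis by (simp add: mixed_norm_def sum_distrib_left)
qed

lemma vnorm_vblock_ctrans_mult_le_rho_c:
  assumes A: "A \<in> carrier_mat (p * d) (q * d)" and d: "0 < d" and w: "dim_vec w = p * d"
    and r: "r < q" and m: "0 \<le> m" "\<And>l. l < p \<Longrightarrow> vnorm (vblock d w l) \<le> m"
  shows "vnorm (vblock d (ctrans A *\<^sub>v w) r) \<le> rho_c d A * m"
proof -
  have "vnorm (vblock d (ctrans A *\<^sub>v w) r) \<le> (\<Sum>l<p. spec_norm (mblock d A l r) * m)"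
    by (rule order_trans[OF vnorm_vblock_ctrans_mult_le[OF A w r] sum_mono])
      (auto intro: mult_left_mono m spec_norm_nonneg)
  also have "\<dots> \<le> rho_c d A * m"
    unfolding sum_distrib_right[symmetric]
    by (intro mult_right_mono block_column_sum_le_rho_c[OF A d r] m(1))
  finally show ?thesis .
qed

section \<open>Least-squares coefficients\<close>

definition block_supported :: "nat \<Rightarrow> nat \<Rightarrow> complex vec \<Rightarrow> nat set \<Rightarrow> bool" where
  "block_supported d M x I \<longleftrightarrow> dim_vec x = M * d \<and> (\<forall>l<M. l \<notin> I \<longrightarrow> vblock d x l = 0\<^sub>v d)"

lemma ls_coeffs_iff:
  "x \<in> ls_coeffs d M D y I \<longleftrightarrow> block_supported d M x I \<and>
     (\<forall>x'. block_supported d M x' I \<longrightarrow> vnorm (y - D *\<^sub>v x) \<le> vnorm (y - D *\<^sub>v x'))"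
  unfolding ls_coeffs_def block_supported_def by blast

lemma block_supported_mono: "block_supported d M x I \<Longrightarrow> I \<subseteq> J \<Longrightarrow> block_supported d M x J"
  unfolding block_supported_def by blast

lemma block_supported_zero: "block_supported d M (0\<^sub>v (M * d)) I"
  unfolding block_supported_def by (simp add: vblock_zero)

lemma block_supported_minus:
  "block_supported d M a I \<Longrightarrow> block_supported d M b I \<Longrightarrow> block_supported d M (a - b) I"
  unfolding block_supported_def by (auto simp: vblock_minus)

lemma block_supported_block_support:
  "dim_vec x = M * d \<Longrightarrow> block_supported d M x (block_support d M x)"
  unfolding block_supported_def block_support_def using vnorm_pos_iff by auto

lemma block_support_subset: "block_supported d M x I \<Longrightarrow> block_support d M x \<subseteq> I"
  unfolding block_supported_def block_support_def by auto

definition single_block :: "nat \<Rightarrow> nat \<Rightarrow> nat \<Rightarrow> complex vec \<Rightarrow> complex vec" where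
  "single_block d M i c = vec (M * d) (\<lambda>p. if p div d = i then c $ (p mod d) else 0)"

lemma dim_single_block [simp]: "dim_vec (single_block d M i c) = M * d"
  unfolding single_block_def by simp

lemma vblock_single_block:
  "dim_vec c = d \<Longrightarrow> l < M \<Longrightarrow> vblock d (single_block d M i c) l = (if l = i then c else 0\<^sub>v d)"
  by (rule eq_vecI) (auto simp: single_block_def block_index_less)

lemma mult_single_block:
  assumes D: "D \<in> carrier_mat n (M * d)" and i: "i < M" and c: "dim_vec c = d"
  shows "D *\<^sub>v single_block d M i c = cblock d D i *\<^sub>v c"
proof (rule eq_vecI)
  fix q assume "q < dim_vec (cblock d D i *\<^sub>v c)"
  hence q: "q < dim_row D" by simp
  have "(D *\<^sub>v single_block d M i c) $ q = (\<Sum>l<M. (cblock d D l *\<^sub>v vblock d (single_block d M i c) l) $ q)"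
    by (rule mult_mat_vec_blocks) (use D q in auto)
  also have "\<dots> = (\<Sum>l<M. if l = i then (cblock d D i *\<^sub>v c) $ q else 0)"
    by (intro sum.cong) (use q c in \<open>auto simp: vblock_single_block scalar_prod_def\<close>)
  finally show "(D *\<^sub>v single_block d M i c) $ q = (cblock d D i *\<^sub>v c) $ q"
    using i by simp
qed (use D in simp)

lemma exists_smult_closer:
  assumes dims: "dim_vec g = dim_vec r" and gr: "vinner g r = of_real a" and a: "0 < a"
  obtains t :: real where "vnorm (r - of_real t \<cdot>\<^sub>v g) < vnorm r"
proof -
  define b where "b = (vnorm g)\<^sup>2"
  define t where "t = a / (b + 1)"
  have b: "0 \<le> b" unfolding b_def by simp
  have t: "0 < t" unfolding t_def using a b by (intro divide_pos_pos) auto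
  have rg: "vinner r g = of_real a" using vinner_commute[of r g] dims gr by simp
  have "of_real ((vnorm (r - of_real t \<cdot>\<^sub>v g))\<^sup>2) = vinner (r - of_real t \<cdot>\<^sub>v g) (r - of_real t \<cdot>\<^sub>v g)"
    by (simp add: vinner_self)
  also have "\<dots> = vinner r r - of_real t * vinner g r - of_real t * vinner r g + of_real (t\<^sup>2) * vinner g g"
    using dims unfolding vinner_def
    by (simp add: algebra_simps sum.distrib sum_subtractf sum_distrib_left power2_eq_square)
  also have "\<dots> = of_real ((vnorm r)\<^sup>2 - t * (2 * a - t * b))"
    unfolding gr rg vinner_self b_def by (simp add: algebra_simps power2_eq_square)
  finally have expand: "(vnorm (r - of_real t \<cdot>\<^sub>v g))\<^sup>2 = (vnorm r)\<^sup>2 - t * (2 * a - t * b)"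
    using of_real_eq_iff by blast
  have "t * b < a" unfolding t_def using a b by (simp add: field_simps)
  hence "0 < t * (2 * a - t * b)" using t a by simp
  hence "(vnorm (r - of_real t \<cdot>\<^sub>v g))\<^sup>2 < (vnorm r)\<^sup>2" using expand by simp
  thus thesis by (intro that[of t]) (simp add: power_less_imp_less_base)
qed

lemma block_supported_add_single_block:
  assumes x: "block_supported d M x I" and i: "i \<in> I" and c: "dim_vec c = d"
  shows "block_supported d M (x + a \<cdot>\<^sub>v single_block d M i c) I"
  unfolding block_supported_def
proof (intro conjI allI impI)
  show "dim_vec (x + a \<cdot>\<^sub>v single_block d M i c) = M * d" by simp
  fix l assume l: "l < M" "l \<notin> I"
  hence "l \<noteq> i" using i by auto
  hence "vblock d (a \<cdot>\<^sub>v single_block d M i c) l = 0\<^sub>v d"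
    using l c by (simp add: vblock_smult[of _ M d] vblock_single_block vec_eq_iff)
  moreover have "vblock d x l = 0\<^sub>v d" "dim_vec x = M * d" using x l unfolding block_supported_def by auto
  ultimately show "vblock d (x + a \<cdot>\<^sub>v single_block d M i c) l = 0\<^sub>v d"
    using l by (simp add: vblock_add[of x M d])
qed

lemma residual_add_single_block:
  assumes D: "D \<in> carrier_mat n (M * d)" and y: "dim_vec y = n" and x: "dim_vec x = M * d"
    and i: "i < M" and c: "dim_vec c = d"
  shows "y - D *\<^sub>v (x + a \<cdot>\<^sub>v single_block d M i c) = (y - D *\<^sub>v x) - a \<cdot>\<^sub>v (cblock d D i *\<^sub>v c)"
proof -
  have "D *\<^sub>v (a \<cdot>\<^sub>v single_block d M i c) = a \<cdot>\<^sub>v (D *\<^sub>v single_block d M i c)"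
    by (rule mult_mat_vec[OF D carrier_vecI]) simp
  also have "D *\<^sub>v single_block d M i c = cblock d D i *\<^sub>v c"
    by (rule mult_single_block[OF D i c])
  finally have De: "D *\<^sub>v (a \<cdot>\<^sub>v single_block d M i c) = a \<cdot>\<^sub>v (cblock d D i *\<^sub>v c)" .
  have "D *\<^sub>v (x + a \<cdot>\<^sub>v single_block d M i c) = D *\<^sub>v x + a \<cdot>\<^sub>v (cblock d D i *\<^sub>v c)"
    unfolding De[symmetric] by (rule mult_add_distrib_mat_vec[OF D carrier_vecI carrier_vecI]) (use x in simp_all)
  thus ?thesis using D y by (intro eq_vecI) simp_all
qed

lemma ls_coeffs_orthogonal:
  assumes D: "D \<in> carrier_mat n (M * d)" and y: "dim_vec y = n"
    and x: "x \<in> ls_coeffs d M D y I" and i: "i \<in> I" "i < M"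
  shows "ctrans (cblock d D i) *\<^sub>v (y - D *\<^sub>v x) = 0\<^sub>v d"
proof (rule ccontr)
  define r where "r = y - D *\<^sub>v x"
  define c where "c = ctrans (cblock d D i) *\<^sub>v r"
  define g where "g = cblock d D i *\<^sub>v c"
  assume "ctrans (cblock d D i) *\<^sub>v (y - D *\<^sub>v x) \<noteq> 0\<^sub>v d"
  hence c0: "0 < vnorm c" unfolding c_def r_def by (simp add: vnorm_pos_iff)
  have xs: "block_supported d M x I"
    and xmin: "\<And>x'. block_supported d M x' I \<Longrightarrow> vnorm r \<le> vnorm (y - D *\<^sub>v x')"
    using x unfolding ls_coeffs_iff r_def by auto
  have dims: "dim_vec c = d" "dim_vec r = n" "dim_vec g = n" "dim_vec x = M * d"
    using xs unfolding c_def r_def g_def block_supported_def using D y by auto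
  have "vinner g r = vinner c (ctrans (cblock d D i) *\<^sub>v r)"
    unfolding g_def by (rule vinner_adjoint) (use dims D in auto)
  hence gr: "vinner g r = of_real ((vnorm c)\<^sup>2)" unfolding c_def[symmetric] vinner_self .
  obtain t :: real where closer: "vnorm (r - of_real t \<cdot>\<^sub>v g) < vnorm r"
    by (rule exists_smult_closer[OF _ gr]) (use dims c0 in simp_all)
  have "vnorm r \<le> vnorm (r - of_real t \<cdot>\<^sub>v g)"
    using xmin[OF block_supported_add_single_block[OF xs i(1) dims(1)]]
    unfolding residual_add_single_block[OF D y dims(4) i(2) dims(1)] r_def g_def .
  with closer show False by simp
qed

lemma ls_coeffs_exact:
  assumes D: "D \<in> carrier_mat n (M * d)" and y: "y = D *\<^sub>v x0"
    and x0: "block_supported d M x0 I" and x: "x \<in> ls_coeffs d M D y I"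
  shows "D *\<^sub>v x = y"
proof -
  have dims: "dim_vec y = n" "dim_vec (D *\<^sub>v x) = n" using y D by auto
  have "vnorm (y - D *\<^sub>v x) \<le> vnorm (y - D *\<^sub>v x0)"
    using x x0 unfolding ls_coeffs_iff by blast
  also have "y - D *\<^sub>v x0 = 0\<^sub>v n" unfolding y by (rule minus_cancel_vec[OF carrier_vecI]) (use D in simp)
  finally have "vnorm (y - D *\<^sub>v x) = 0" using vnorm_nonneg[of "y - D *\<^sub>v x"] by simp
  hence "y - D *\<^sub>v x = 0\<^sub>v n" using vnorm_eq_0_iff[of "y - D *\<^sub>v x"] dims by simp
  thus ?thesis using minus_eq_0_vecD[of y n "D *\<^sub>v x"] dims by simp
qed

section \<open>Runs of BOMP\<close>

abbreviation block_correlation :: "nat \<Rightarrow> complex mat \<Rightarrow> complex vec \<Rightarrow> nat \<Rightarrow> real" where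
  "block_correlation d D r i \<equiv> vnorm (ctrans (cblock d D i) *\<^sub>v r)"

text \<open>The witness \<open>p\<close> is the coefficient vector of the previous stage (zero at the first stage).\<close>

lemma bomp_run_stage:
  assumes run: "bomp_run d M D y is xs" and D: "D \<in> carrier_mat n (M * d)" and y: "dim_vec y = n"
    and j: "j < length is"
  obtains p where "block_supported d M p (set (take j is))" "is ! j < M"
    "\<And>i. i < M \<Longrightarrow> block_correlation d D (y - D *\<^sub>v p) i \<le> block_correlation d D (y - D *\<^sub>v p) (is ! j)"
    "\<And>i. i \<in> set (take j is) \<Longrightarrow> i < M \<Longrightarrow> ctrans (cblock d D i) *\<^sub>v (y - D *\<^sub>v p) = 0\<^sub>v d"
proof -
  define r where "r = (if j = 0 then y else y - D *\<^sub>v (xs ! (j - 1)))"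
  have stage: "is ! j < M" "\<And>i. i < M \<Longrightarrow> block_correlation d D r i \<le> block_correlation d D r (is ! j)"
    using run j unfolding bomp_run_def Let_def r_def by blast+
  show thesis
  proof (cases "j = 0")
    case True
    have "y - D *\<^sub>v 0\<^sub>v (M * d) = r" unfolding r_def using True D y by (intro eq_vecI) auto
    thus thesis using that[of "0\<^sub>v (M * d)"] stage block_supported_zero True by simp
  next
    case False
    hence "Suc (j - 1) = j" "j - 1 < length is" using j by auto
    hence prev: "xs ! (j - 1) \<in> ls_coeffs d M D y (set (take j is))"
      using run unfolding bomp_run_def Let_def by metis
    show thesis
    proof (rule that[of "xs ! (j - 1)"])
      show "block_supported d M (xs ! (j - 1)) (set (take j is))"
        using prev unfolding ls_coeffs_iff by blast
    qed (use stage False ls_coeffs_orthogonal[OF D y prev] in \<open>simp_all add: r_def\<close>)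
  qed
qed

lemma bomp_run_last:
  assumes run: "bomp_run d M D y is xs" and k: "length is = k" "k \<noteq> 0"
  shows "last xs \<in> ls_coeffs d M D y (set is)"
proof -
  have all: "\<forall>j<length is. xs ! j \<in> ls_coeffs d M D y (set (take (Suc j) is))"
    and "length xs = k" using run k unfolding bomp_run_def Let_def by auto
  hence "last xs = xs ! (k - 1)" using k last_conv_nth[of xs] by fastforce
  moreover have "k - 1 < length is" "take (Suc (k - 1)) is = is" using k by auto
  ultimately show ?thesis using all by metis
qed

lemma distinct_if_nth_notin_take:
  assumes "\<forall>j<length xs. xs ! j \<notin> set (take j xs)"
  shows "distinct xs"
  unfolding distinct_conv_nth
proof (intro allI impI)
  fix i j assume ij: "i < length xs" "j < length xs" "i \<noteq> j"
  have "xs ! min i j \<in> set (take (max i j) xs)"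
    using ij by (auto simp: in_set_conv_nth min_def max_def intro!: exI[of _ "min i j"])
  thus "xs ! i \<noteq> xs ! j"
    using assms ij by (cases "i < j") (auto simp: min_def max_def)
qed

section \<open>Recovery under the block exact recovery condition\<close>

locale block_erc =
  fixes D :: "complex mat" and x0 :: "complex vec" and d R M k :: nat
  assumes d_pos: "d > 0"
    and D: "D \<in> carrier_mat (R * d) (M * d)"
    and spark: "\<forall>g. dim_vec g = M * d \<and> g \<noteq> 0\<^sub>v (M * d) \<and> block_sparse d M (2 * k) g
                  \<longrightarrow> D *\<^sub>v g \<noteq> 0\<^sub>v (R * d)"
    and x0: "dim_vec x0 = M * d"
    and card_block_support: "card (block_support d M x0) = k"
    and erc: "rho_c d (pinv (blocks_mat d D (sorted_list_of_set (block_support d M x0)))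
                 * blocks_mat d D (sorted_list_of_set ({..<M} - block_support d M x0))) < 1"
begin

definition supp :: "nat set" where "supp = block_support d M x0"
definition supp_list :: "nat list" where "supp_list = sorted_list_of_set supp"
definition off_list :: "nat list" where "off_list = sorted_list_of_set ({..<M} - supp)"
definition D0 :: "complex mat" where "D0 = blocks_mat d D supp_list"
definition D0bar :: "complex mat" where "D0bar = blocks_mat d D off_list"
definition A :: "complex mat" where "A = pinv D0 * D0bar"

lemma rho_c_A: "rho_c d A < 1"
  using erc unfolding A_def D0_def D0bar_def supp_list_def off_list_def supp_def .

lemma supp_subset: "supp \<subseteq> {..<M}"
  unfolding supp_def block_support_def by auto

lemma finite_supp: "finite supp"
  using supp_subset finite_subset by blast

lemma card_supp: "card supp = k"
  using card_block_support unfolding supp_def .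

lemma supp_list: "set supp_list = supp" "distinct supp_list" "length supp_list = k"
  unfolding supp_list_def using finite_supp card_supp by simp_all

lemma off_list: "set off_list = {..<M} - supp" "distinct off_list" "length off_list = M - k"
  unfolding off_list_def
  using card_Diff_subset[OF finite_supp supp_subset] card_supp by simp_all

lemma x0_supported: "block_supported d M x0 supp"
  unfolding supp_def by (rule block_supported_block_support[OF x0])

lemma sum_split_supp:
  "(\<Sum>l<M. f l) = (\<Sum>j<k. f (supp_list ! j)) + (\<Sum>j<M - k. f (off_list ! j))"
proof -
  have "(\<Sum>l<M. f l) = sum f ({..<M} - supp) + sum f supp"
    by (rule sum.subset_diff[OF supp_subset]) simp
  also have "sum f supp = (\<Sum>j<k. f (supp_list ! j))"
    using sum.reindex_bij_betw[OF bij_betw_nth[OF supp_list(2) refl refl], of f] supp_list by simp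
  also have "sum f ({..<M} - supp) = (\<Sum>j<M - k. f (off_list ! j))"
    using sum.reindex_bij_betw[OF bij_betw_nth[OF off_list(2) refl refl], of f] off_list by simp
  finally show ?thesis by (simp add: ac_simps)
qed

lemma D0_carrier: "D0 \<in> carrier_mat (R * d) (k * d)"
  unfolding D0_def by (rule carrier_matI) (use D supp_list in auto)

lemma D0bar_carrier: "D0bar \<in> carrier_mat (R * d) ((M - k) * d)"
  unfolding D0bar_def by (rule carrier_matI) (use D off_list in auto)

lemma gather_off_list_zero:
  assumes "block_supported d M x supp"
  shows "gather_blocks d off_list x = 0\<^sub>v ((M - k) * d)"
proof (rule vblock_eqI[of _ "M - k"])
  fix t assume t: "t < M - k"
  hence "off_list ! t \<in> {..<M} - supp" using off_list nth_mem by metis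
  thus "vblock d (gather_blocks d off_list x) t = vblock d (0\<^sub>v ((M - k) * d)) t"
    using assms t off_list(3) by (simp add: vblock_gather_blocks vblock_zero block_supported_def)
qed (use off_list in simp_all)

lemma supported_if_gather_off_list_zero:
  assumes "dim_vec x = M * d" "gather_blocks d off_list x = 0\<^sub>v ((M - k) * d)"
  shows "block_supported d M x supp"
  unfolding block_supported_def
proof (intro conjI allI impI)
  fix l assume "l < M" "l \<notin> supp"
  then obtain t where t: "t < M - k" "l = off_list ! t"
    using off_list by (metis DiffI in_set_conv_nth lessThan_iff)
  thus "vblock d x l = 0\<^sub>v d"
    using arg_cong[OF assms(2), of "\<lambda>v. vblock d v t"] off_list(3)
    by (simp add: vblock_gather_blocks vblock_zero)
qed (use assms in simp)

lemma mult_split: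
  assumes x: "dim_vec x = M * d"
  shows "D *\<^sub>v x = D0 *\<^sub>v gather_blocks d supp_list x + D0bar *\<^sub>v gather_blocks d off_list x"
proof (rule eq_vecI)
  fix i assume "i < dim_vec (D0 *\<^sub>v gather_blocks d supp_list x + D0bar *\<^sub>v gather_blocks d off_list x)"
  hence i: "i < R * d" using D0bar_carrier by simp
  have dims: "dim_col D = M * d" "dim_row D = R * d" using D by auto
  have "(D *\<^sub>v x) $ i = (\<Sum>l<M. (cblock d D l *\<^sub>v vblock d x l) $ i)"
    by (rule mult_mat_vec_blocks) (use dims x i in auto)
  also have "\<dots> = (\<Sum>j<k. (cblock d D (supp_list ! j) *\<^sub>v vblock d x (supp_list ! j)) $ i)
      + (\<Sum>j<M - k. (cblock d D (off_list ! j) *\<^sub>v vblock d x (off_list ! j)) $ i)"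
    by (rule sum_split_supp)
  also have "\<dots> = (D0 *\<^sub>v gather_blocks d supp_list x) $ i + (D0bar *\<^sub>v gather_blocks d off_list x) $ i"
    unfolding D0_def D0bar_def
    using blocks_mat_mult_vec[OF dims(1), of supp_list "gather_blocks d supp_list x" i]
      blocks_mat_mult_vec[OF dims(1), of off_list "gather_blocks d off_list x" i]
      supp_list off_list supp_subset dims i
    by (simp add: vblock_gather_blocks)
  finally show "(D *\<^sub>v x) $ i = (D0 *\<^sub>v gather_blocks d supp_list x + D0bar *\<^sub>v gather_blocks d off_list x) $ i"
    using i D0_carrier D0bar_carrier by simp
qed (use D D0bar_carrier in simp)

lemma mult_supported:
  assumes "block_supported d M x supp"
  shows "D *\<^sub>v x = D0 *\<^sub>v gather_blocks d supp_list x"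
proof -
  have "D0bar *\<^sub>v gather_blocks d off_list x = 0\<^sub>v (R * d)"
    unfolding gather_off_list_zero[OF assms] using D0bar_carrier
    by (intro eq_vecI) (auto simp: scalar_prod_def)
  moreover have "D0 *\<^sub>v gather_blocks d supp_list x \<in> carrier_vec (R * d)"
    using D0_carrier by (intro carrier_vecI) simp
  ultimately show ?thesis
    using mult_split assms unfolding block_supported_def by simp
qed

lemma supported_kernel_trivial:
  assumes x: "block_supported d M x supp" and Dx: "D *\<^sub>v x = 0\<^sub>v (R * d)"
  shows "x = 0\<^sub>v (M * d)"
proof -
  have "card (block_support d M x) \<le> k"
    using card_mono[OF finite_supp block_support_subset[OF x]] card_supp by simp
  thus ?thesis
    using spark Dx x unfolding block_sparse_def block_supported_def by auto
qed

definition scatter_supp :: "complex vec \<Rightarrow> complex vec" where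
  "scatter_supp u = vec (M * d) (\<lambda>c. if c div d \<in> supp
     then u $ (the_inv_into {..<k} ((!) supp_list) (c div d) * d + c mod d) else 0)"

lemma scatter_supp_supported: "block_supported d M (scatter_supp u) supp"
  unfolding block_supported_def
proof (intro conjI allI impI)
  fix l assume "l < M" "l \<notin> supp"
  thus "vblock d (scatter_supp u) l = 0\<^sub>v d" by (intro eq_vecI) (auto simp: scatter_supp_def block_index_less)
qed (simp add: scatter_supp_def)

lemma gather_scatter_supp:
  assumes u: "dim_vec u = k * d"
  shows "gather_blocks d supp_list (scatter_supp u) = u"
proof (rule vblock_eqI[of _ k])
  fix j assume j: "j < k"
  have inv: "the_inv_into {..<k} ((!) supp_list) (supp_list ! j) = j"
    using bij_betw_nth[OF supp_list(2) refl refl] supp_list(3) j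
    by (intro the_inv_into_f_f) (auto simp: bij_betw_def)
  have mem: "supp_list ! j \<in> supp" "supp_list ! j < M"
    using supp_list j supp_subset nth_mem by fastforce+
  show "vblock d (gather_blocks d supp_list (scatter_supp u)) j = vblock d u j"
  proof (rule eq_vecI)
    fix t assume "t < dim_vec (vblock d u j)"
    hence t: "t < d" by simp
    have "supp_list ! j * d + t < M * d" using block_index_less[OF mem(2) t] .
    thus "vblock d (gather_blocks d supp_list (scatter_supp u)) j $ t = vblock d u j $ t"
      using t inv mem j supp_list(3) by (simp add: vblock_gather_blocks scatter_supp_def)
  qed simp
qed (use u supp_list in simp_all)

lemma D0_injective:
  assumes u: "u \<in> carrier_vec (k * d)" and D0u: "D0 *\<^sub>v u = 0\<^sub>v (R * d)"
  shows "u = 0\<^sub>v (k * d)"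
proof -
  have du: "dim_vec u = k * d" using u by simp
  have "D *\<^sub>v scatter_supp u = 0\<^sub>v (R * d)"
    using mult_supported[OF scatter_supp_supported] gather_scatter_supp[OF du] D0u by simp
  hence "scatter_supp u = 0\<^sub>v (M * d)" by (rule supported_kernel_trivial[OF scatter_supp_supported])
  hence "gather_blocks d supp_list (scatter_supp u) = 0\<^sub>v (k * d)"
    using gather_blocks_zero[OF supp_subset[folded supp_list(1)]] supp_list(3) by simp
  thus ?thesis using gather_scatter_supp[OF du] by simp
qed

lemmas pinv_D0 = pinv_of_injective[OF D0_carrier D0_injective]

lemma A_carrier: "A \<in> carrier_mat (k * d) ((M - k) * d)"
  unfolding A_def using pinv_D0(1) D0bar_carrier by (rule mult_carrier_mat)

lemma mixed_norm_split:
  assumes "dim_vec x = M * d"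
  shows "mixed_norm d M x = mixed_norm d k (gather_blocks d supp_list x)
                            + mixed_norm d (M - k) (gather_blocks d off_list x)"
  unfolding mixed_norm_def sum_split_supp[of "\<lambda>l. vnorm (vblock d x l)"]
  using supp_list(3) off_list(3) by (simp add: vblock_gather_blocks)

lemma off_support_correlation_dominated:
  assumes z: "block_supported d M z supp" and Dz: "D *\<^sub>v z \<noteq> 0\<^sub>v (R * d)"
  obtains l where "l \<in> supp" "0 < block_correlation d D (D *\<^sub>v z) l"
    "\<And>i. i < M \<Longrightarrow> i \<notin> supp \<Longrightarrow> block_correlation d D (D *\<^sub>v z) i < block_correlation d D (D *\<^sub>v z) l"
proof -
  define u where "u = gather_blocks d supp_list z"
  define r where "r = D *\<^sub>v z"
  define w where "w = ctrans D0 *\<^sub>v r"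
  have u: "u \<in> carrier_vec (k * d)" unfolding u_def using supp_list by (simp add: carrier_vecI)
  have r: "r = D0 *\<^sub>v u" "dim_vec r = R * d"
    unfolding r_def u_def using mult_supported[OF z] D0_carrier by auto
  have dimD: "dim_col D = M * d" "dim_row D = R * d" using D by auto
  have w: "dim_vec w = k * d" unfolding w_def using D0_carrier by simp
  have w0: "w \<noteq> 0\<^sub>v (k * d)"
    using ctrans_mult_vec_eq_0[of u D0] Dz u D0_carrier unfolding w_def r(1)[symmetric] r_def by auto
  obtain jm where jm: "jm < k" "0 < vnorm (vblock d w jm)"
    and jm_max: "\<And>j. j < k \<Longrightarrow> vnorm (vblock d w j) \<le> vnorm (vblock d w jm)"
    using max_vblock[OF w w0] by blast
  have w_block: "vblock d w j = ctrans (cblock d D (supp_list ! j)) *\<^sub>v r" if "j < k" for j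
    unfolding w_def D0_def
    by (rule vblock_ctrans_blocks_mat[OF dimD(1)]) (use that r dimD supp_list supp_subset in auto)
  show thesis
  proof (rule that)
    show "supp_list ! jm \<in> supp" using jm(1) supp_list nth_mem by metis
    show "0 < block_correlation d D (D *\<^sub>v z) (supp_list ! jm)"
      using jm w_block unfolding r_def by simp
    fix i assume i: "i < M" "i \<notin> supp"
    then obtain t where t: "t < M - k" "i = off_list ! t"
      using off_list by (metis DiffI in_set_conv_nth lessThan_iff)
    have "ctrans (cblock d D i) *\<^sub>v r = vblock d (ctrans D0bar *\<^sub>v r) t"
      unfolding D0bar_def t(2)
      by (rule vblock_ctrans_blocks_mat[OF dimD(1), symmetric]) (use t r dimD off_list in auto)
    also have "ctrans D0bar *\<^sub>v r = ctrans A *\<^sub>v w"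
      unfolding A_def w_def r(1)
      by (rule ctrans_mult_range_via_pinv[OF D0_carrier D0_injective D0bar_carrier u])
    finally have "block_correlation d D r i = vnorm (vblock d (ctrans A *\<^sub>v w) t)" by simp
    also have "\<dots> \<le> rho_c d A * vnorm (vblock d w jm)"
      by (rule vnorm_vblock_ctrans_mult_le_rho_c[OF A_carrier d_pos w t(1)]) (use jm_max in auto)
    also have "\<dots> < vnorm (vblock d w jm)" using rho_c_A jm(2) by simp
    finally show "block_correlation d D (D *\<^sub>v z) i < block_correlation d D (D *\<^sub>v z) (supp_list ! jm)"
      using w_block[OF jm(1)] unfolding r_def by simp
  qed
qed

lemma null_space_property:
  assumes h: "dim_vec h = M * d" and Dh: "D *\<^sub>v h = 0\<^sub>v (R * d)" and ne: "h \<noteq> 0\<^sub>v (M * d)"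
  shows "mixed_norm d k (gather_blocks d supp_list h) < mixed_norm d (M - k) (gather_blocks d off_list h)"
proof -
  define h0 where "h0 = gather_blocks d supp_list h"
  define h1 where "h1 = gather_blocks d off_list h"
  have dims: "dim_vec h0 = k * d" "dim_vec h1 = (M - k) * d"
    unfolding h0_def h1_def using supp_list off_list by simp_all
  have "h1 \<noteq> 0\<^sub>v ((M - k) * d)"
  proof
    assume "h1 = 0\<^sub>v ((M - k) * d)"
    hence "block_supported d M h supp"
      using supported_if_gather_off_list_zero h unfolding h1_def by blast
    with ne Dh supported_kernel_trivial show False by blast
  qed
  hence h1_pos: "0 < mixed_norm d (M - k) h1" by (rule mixed_norm_pos[OF dims(2)])
  have rel: "D0 *\<^sub>v h0 + D0bar *\<^sub>v h1 = 0\<^sub>v (R * d)"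
    using mult_split[OF h] Dh unfolding h0_def h1_def by simp
  have "h0 = - (A *\<^sub>v h1)"
    unfolding A_def
    by (rule pinv_solves_kernel_relation[OF D0_carrier D0_injective D0bar_carrier carrier_vecI carrier_vecI rel])
      (use dims in simp_all)
  hence "mixed_norm d k h0 = mixed_norm d k (A *\<^sub>v h1)"
    using A_carrier mixed_norm_uminus[of "A *\<^sub>v h1" k d] by simp
  also have "\<dots> \<le> rho_c d A * mixed_norm d (M - k) h1"
    by (rule mixed_norm_mult_le_rho_c[OF A_carrier d_pos dims(2)])
  also have "\<dots> < mixed_norm d (M - k) h1" using rho_c_A h1_pos by simp
  finally show ?thesis unfolding h0_def h1_def .
qed

lemma l_opt_unique:
  assumes x: "dim_vec x = M * d" and Dx: "D *\<^sub>v x = D *\<^sub>v x0" and ne: "x \<noteq> x0"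
  shows "mixed_norm d M x0 < mixed_norm d M x"
proof -
  define h where "h = x - x0"
  have h: "dim_vec h = M * d" unfolding h_def using x0 by simp
  have "D *\<^sub>v h = D *\<^sub>v x - D *\<^sub>v x0"
    unfolding h_def by (rule mult_minus_distrib_mat_vec[OF D carrier_vecI carrier_vecI]) (use x x0 in simp_all)
  also have "\<dots> = 0\<^sub>v (R * d)" unfolding Dx by (rule minus_cancel_vec[OF carrier_vecI]) (use D in simp)
  finally have Dh: "D *\<^sub>v h = 0\<^sub>v (R * d)" .
  have "h \<noteq> 0\<^sub>v (M * d)" unfolding h_def using minus_eq_0_vecD x x0 ne by blast
  note nsp = null_space_property[OF h Dh this]
  have supp_part: "gather_blocks d supp_list h = gather_blocks d supp_list x - gather_blocks d supp_list x0"
    unfolding h_def by (rule gather_blocks_minus[OF x x0]) (use supp_list supp_subset in simp)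
  have "gather_blocks d off_list h = gather_blocks d off_list x - gather_blocks d off_list x0"
    unfolding h_def by (rule gather_blocks_minus[OF x x0]) (use off_list in simp)
  also have "\<dots> = gather_blocks d off_list x"
    unfolding gather_off_list_zero[OF x0_supported]
    by (rule minus_zero_vec[OF carrier_vecI]) (use off_list in simp)
  finally have off_part: "gather_blocks d off_list h = gather_blocks d off_list x" .
  have "mixed_norm d M x0 = mixed_norm d k (gather_blocks d supp_list x0)"
    using mixed_norm_split[OF x0] gather_off_list_zero[OF x0_supported] by simp
  also have "\<dots> \<le> mixed_norm d k (gather_blocks d supp_list x) + mixed_norm d k (gather_blocks d supp_list h)"
    unfolding supp_part by (rule mixed_norm_le_diff) (use supp_list in simp_all)
  also have "\<dots> < mixed_norm d k (gather_blocks d supp_list x) + mixed_norm d (M - k) (gather_blocks d off_list h)"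
    using nsp by simp
  also have "\<dots> = mixed_norm d M x" using mixed_norm_split[OF x] off_part by simp
  finally show ?thesis .
qed

lemma bomp_selects_new_support_block:
  assumes run: "bomp_run d M D (D *\<^sub>v x0) is xs" and j: "j < length is" "j < k"
    and prev: "set (take j is) \<subseteq> supp"
  shows "is ! j \<in> supp \<and> is ! j \<notin> set (take j is)"
proof -
  have y: "dim_vec (D *\<^sub>v x0) = R * d" using D by simp
  obtain p where p: "block_supported d M p (set (take j is))" and ij: "is ! j < M"
    and greedy: "\<And>i. i < M \<Longrightarrow> block_correlation d D (D *\<^sub>v x0 - D *\<^sub>v p) i
                                   \<le> block_correlation d D (D *\<^sub>v x0 - D *\<^sub>v p) (is ! j)"
    and orth: "\<And>i. i \<in> set (take j is) \<Longrightarrow> i < M \<Longrightarrow> ctrans (cblock d D i) *\<^sub>v (D *\<^sub>v x0 - D *\<^sub>v p) = 0\<^sub>v d"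
    using bomp_run_stage[OF run D y j(1)] by blast
  define z where "z = x0 - p"
  have z: "block_supported d M z supp"
    unfolding z_def by (rule block_supported_minus[OF x0_supported block_supported_mono[OF p prev]])
  have residual: "D *\<^sub>v x0 - D *\<^sub>v p = D *\<^sub>v z"
    unfolding z_def by (rule mult_minus_distrib_mat_vec[symmetric, OF D carrier_vecI carrier_vecI])
      (use x0 p in \<open>simp_all add: block_supported_def\<close>)
  have Dz: "D *\<^sub>v z \<noteq> 0\<^sub>v (R * d)"
  proof
    assume "D *\<^sub>v z = 0\<^sub>v (R * d)"
    hence "z = 0\<^sub>v (M * d)" by (rule supported_kernel_trivial[OF z])
    hence "x0 = p" using minus_eq_0_vecD x0 p unfolding z_def block_supported_def by blast
    hence "block_support d M x0 \<subseteq> set (take j is)" using p block_support_subset by blast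
    hence "k \<le> card (set (take j is))"
      using card_mono[OF finite_set] card_block_support by metis
    also have "\<dots> \<le> j" using card_length[of "take j is"] by simp
    finally show False using j(2) by simp
  qed
  obtain l where l: "l \<in> supp" "0 < block_correlation d D (D *\<^sub>v z) l"
    and dom: "\<And>i. i < M \<Longrightarrow> i \<notin> supp \<Longrightarrow> block_correlation d D (D *\<^sub>v z) i < block_correlation d D (D *\<^sub>v z) l"
    using off_support_correlation_dominated[OF z Dz] by blast
  have ge: "block_correlation d D (D *\<^sub>v z) l \<le> block_correlation d D (D *\<^sub>v z) (is ! j)"
    using greedy[of l] l(1) supp_subset unfolding residual by auto
  have "is ! j \<in> supp" using dom[OF ij] ge by fastforce
  moreover have "is ! j \<notin> set (take j is)" using orth[OF _ ij] ge l(2) unfolding residual by fastforce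
  ultimately show ?thesis ..
qed

lemma bomp_selects_correctly:
  assumes run: "bomp_run d M D (D *\<^sub>v x0) is xs" and len: "length is \<le> k"
  shows "\<forall>j<length is. is ! j \<in> supp \<and> is ! j \<notin> set (take j is)"
proof (intro allI impI)
  fix j assume "j < length is"
  thus "is ! j \<in> supp \<and> is ! j \<notin> set (take j is)"
  proof (induction j rule: less_induct)
    case (less j)
    have "set (take j is) \<subseteq> supp"
      using less by (auto simp: in_set_conv_nth)
    thus ?case using bomp_selects_new_support_block[OF run less.prems] len less.prems by simp
  qed
qed

lemma bomp_recovers:
  assumes run: "bomp_run d M D (D *\<^sub>v x0) is xs" and len: "length is = k"
  shows "(if k = 0 then 0\<^sub>v (M * d) else last xs) = x0"
proof (cases "k = 0")
  case True
  hence empty: "block_supported d M x0 {}" using x0_supported card_supp finite_supp by simp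
  have "x0 = 0\<^sub>v (M * d)"
  proof (rule vblock_eqI[of _ M d])
    fix l assume "l < M"
    thus "vblock d x0 l = vblock d (0\<^sub>v (M * d)) l"
      using empty by (simp add: block_supported_def vblock_zero)
  qed (use x0 in simp_all)
  thus ?thesis using True by simp
next
  case False
  have sel: "\<forall>j<length is. is ! j \<in> supp \<and> is ! j \<notin> set (take j is)"
    using bomp_selects_correctly[OF run] len by simp
  hence "distinct is" by (intro distinct_if_nth_notin_take) blast
  moreover have "set is \<subseteq> supp" using sel by (auto simp: in_set_conv_nth)
  ultimately have "set is = supp"
    using card_subset_eq[OF finite_supp] distinct_card len card_supp by metis
  hence xl: "last xs \<in> ls_coeffs d M D (D *\<^sub>v x0) supp" using bomp_run_last[OF run len False] by simp
  hence xl_supp: "block_supported d M (last xs) supp" unfolding ls_coeffs_iff by blast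
  have "D *\<^sub>v last xs = D *\<^sub>v x0" by (rule ls_coeffs_exact[OF D refl x0_supported xl])
  moreover have "D *\<^sub>v (x0 - last xs) = D *\<^sub>v x0 - D *\<^sub>v last xs"
    by (rule mult_minus_distrib_mat_vec[OF D carrier_vecI carrier_vecI])
      (use x0 xl_supp in \<open>simp_all add: block_supported_def\<close>)
  ultimately have "D *\<^sub>v (x0 - last xs) = 0\<^sub>v (R * d)"
    using D by (simp add: minus_cancel_vec[OF carrier_vecI])
  hence "x0 - last xs = 0\<^sub>v (M * d)"
    by (rule supported_kernel_trivial[OF block_supported_minus[OF x0_supported xl_supp]])
  hence "x0 = last xs" using minus_eq_0_vecD x0 xl_supp unfolding block_supported_def by blast
  thus ?thesis using False by simp
qed

end

theorem theorem2:
  fixes D :: "complex mat" and x0 y :: "complex vec" and d R M k :: nat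
  assumes "d > 0"
    and "D \<in> carrier_mat (R * d) (M * d)"
    and "\<forall>j < M * d. vnorm (col D j) = 1"
    and "\<forall>g. dim_vec g = M * d \<and> g \<noteq> 0\<^sub>v (M * d) \<and> block_sparse d M (2 * k) g
              \<longrightarrow> D *\<^sub>v g \<noteq> 0\<^sub>v (R * d)"
    and "dim_vec x0 = M * d"
    and "card (block_support d M x0) = k"
    and "y = D *\<^sub>v x0"
    and "rho_c d (pinv (blocks_mat d D (sorted_list_of_set (block_support d M x0)))
                 * blocks_mat d D (sorted_list_of_set ({..<M} - block_support d M x0))) < 1"
  shows "(\<forall>x. dim_vec x = M * d \<and> D *\<^sub>v x = y \<and> x \<noteq> x0
              \<longrightarrow> mixed_norm d M x0 < mixed_norm d M x)
       \<and> (\<forall>is xs. bomp_run d M D y is xs \<and> length is \<le> k \<longrightarrow>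
              (\<forall>j < length is. is ! j \<in> block_support d M x0 \<and> is ! j \<notin> set (take j is)))
       \<and> (\<forall>is xs. bomp_run d M D y is xs \<and> length is = k \<longrightarrow>
              (if k = 0 then 0\<^sub>v (M * d) else last xs) = x0)"
proof -
  interpret block_erc D x0 d R M k
    using assms(1,2,4-6,8) by unfold_locales
  show ?thesis
    using l_opt_unique bomp_selects_correctly bomp_recovers assms(7)
    unfolding supp_def by blast
qed

end
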